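(* Let $D=\mathrm{diag}(1,-1,1,-1,\ldots)=(1,-x)$, let $R$ be a Riordan involution (respectively, a Riordan pseudo involution), and put $U=RD$ and $V=DR$. Then for each positive integer $n$: (a) the columns of $(U+D)^n$ (respectively, $(R+D)^n$) are $R$-invariant sequences of the first kind; (b) the columns of $(U-D)^n$ (respectively, $(R-D)^n$) are inverse $R$-invariant sequences of the first kind; (c) the columns of $(V^T+D)^n$ (respectively, $(R^T+D)^n$) are $R$-invariant sequences of the second kind; (d) the columns of $(V^T-D)^n$ (respectively, $(R^T-D)^n$) are inverse $R$-invariant sequences of the second kind.
   Context: All matrices are infinite, indexed by $0,1,2,\ldots$. A Riordan matrix $(g(x),f(x))$, with $g(x)=g_0+g_1x+\cdots$, $g_0\ne0$, and $f(x)=f_1x+\cdots$, $f_1\ne0$, is the infinite lower triangular matrix whose $j$-th column has generating function $g(x)f(x)^j$. A Riordan matrix $R$ is a Riordan involution if $R^2=I$ and a Riordan pseudo involution if $(RD)^2=I$. For a Riordan involution $R$, a vector $\mathbf x\in\mathbb{R}^\infty$ is an $R$-invariant sequence of the first kind if $R\mathbf x=\mathbf x$, an inverse $R$-invariant sequence of the first kind if $R\mathbf x=-\mathbf x$, an $R$-invariant sequence of the second kind if $R^T\mathbf x=\mathbf x$, and an inverse $R$-invariant sequence of the second kind if $R^T\mathbf x=-\mathbf x$. For a Riordan pseudo involution $R$, the same notions are defined with $R$ replaced by $RD$ (first kind) and $R^T$ replaced by $R^TD$ (second kind). *)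

theory Defs
  imports "HOL-Analysis.Analysis" "HOL-Computational_Algebra.Formal_Power_Series"
begin

type_synonym imat = "nat \<Rightarrow> nat \<Rightarrow> real"
type_synonym ivec = "nat \<Rightarrow> real"

definition mmul :: "imat \<Rightarrow> imat \<Rightarrow> imat" where
  "mmul A B = (\<lambda>i j. infsum (\<lambda>k. A i k * B k j) UNIV)"

definition mvmul :: "imat \<Rightarrow> ivec \<Rightarrow> ivec" where
  "mvmul A x = (\<lambda>i. infsum (\<lambda>k. A i k * x k) UNIV)"

definition idm :: imat where
  "idm = (\<lambda>i j. if i = j then 1 else 0)"

definition mtrans :: "imat \<Rightarrow> imat" where
  "mtrans A = (\<lambda>i j. A j i)"

definition madd :: "imat \<Rightarrow> imat \<Rightarrow> imat" where
  "madd A B = (\<lambda>i j. A i j + B i j)"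

definition msub :: "imat \<Rightarrow> imat \<Rightarrow> imat" where
  "msub A B = (\<lambda>i j. A i j - B i j)"

primrec mpow :: "imat \<Rightarrow> nat \<Rightarrow> imat" where
  "mpow A 0 = idm"
| "mpow A (Suc n) = mmul (mpow A n) A"

definition col :: "imat \<Rightarrow> nat \<Rightarrow> ivec" where
  "col A j = (\<lambda>i. A i j)"

definition riordan_array :: "real fps \<Rightarrow> real fps \<Rightarrow> imat" where
  "riordan_array g f = (\<lambda>i j. fps_nth (g * f ^ j) i)"

definition is_riordan :: "imat \<Rightarrow> bool" where
  "is_riordan R \<longleftrightarrow> (\<exists>g f. fps_nth g 0 \<noteq> 0 \<and> fps_nth f 0 = 0 \<and> fps_nth f 1 \<noteq> 0
                        \<and> R = riordan_array g f)"

definition Dm :: imat where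
  "Dm = riordan_array 1 (- fps_X)"

definition riordan_involution :: "imat \<Rightarrow> bool" where
  "riordan_involution R \<longleftrightarrow> is_riordan R \<and> mmul R R = idm"

definition riordan_pseudo_involution :: "imat \<Rightarrow> bool" where
  "riordan_pseudo_involution R \<longleftrightarrow> is_riordan R \<and> mmul (mmul R Dm) (mmul R Dm) = idm"

definition inv_first :: "imat \<Rightarrow> ivec \<Rightarrow> bool" where
  "inv_first R x \<longleftrightarrow> mvmul R x = x"
definition inverse_inv_first :: "imat \<Rightarrow> ivec \<Rightarrow> bool" where
  "inverse_inv_first R x \<longleftrightarrow> mvmul R x = (\<lambda>i. - x i)"
definition inv_second :: "imat \<Rightarrow> ivec \<Rightarrow> bool" where
  "inv_second R x \<longleftrightarrow> mvmul (mtrans R) x = x"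
definition inverse_inv_second :: "imat \<Rightarrow> ivec \<Rightarrow> bool" where
  "inverse_inv_second R x \<longleftrightarrow> mvmul (mtrans R) x = (\<lambda>i. - x i)"

text \<open>Invariant sequences for a Riordan pseudo involution R (R replaced by RD, R^T by R^T D).\<close>
definition pinv_first :: "imat \<Rightarrow> ivec \<Rightarrow> bool" where
  "pinv_first R x \<longleftrightarrow> mvmul (mmul R Dm) x = x"
definition inverse_pinv_first :: "imat \<Rightarrow> ivec \<Rightarrow> bool" where
  "inverse_pinv_first R x \<longleftrightarrow> mvmul (mmul R Dm) x = (\<lambda>i. - x i)"
definition pinv_second :: "imat \<Rightarrow> ivec \<Rightarrow> bool" where
  "pinv_second R x \<longleftrightarrow> mvmul (mmul (mtrans R) Dm) x = x"
definition inverse_pinv_second :: "imat \<Rightarrow> ivec \<Rightarrow> bool" where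
  "inverse_pinv_second R x \<longleftrightarrow> mvmul (mmul (mtrans R) Dm) x = (\<lambda>i. - x i)"

end

theory Submission
  imports Defs
begin

text \<open>
  Every identity needed lives in a ring of triangular matrices in which D is an involution.
  If X is an involution of such a ring, then X (X D \<plusminus> D) = D \<plusminus> X D = \<plusminus>(X D \<plusminus> D), so
  every power A = (X D \<plusminus> D)^n with n \<ge> 1 satisfies X A = \<plusminus>A, i.e. each column of A is
  an eigenvector of X for the eigenvalue \<plusminus>1. The four cases of the theorem are the
  involutions X = R and X = R^T (with X D = U resp. V^T) and, for pseudo involutions,
  X = R D and X = R^T D (with X D = R resp. R^T, because D^2 = I).
  Triangularity keeps all matrix products finite sums, so they are associative.
\<close>

definition lower_triangular :: "imat \<Rightarrow> bool" where
  "lower_triangular A \<longleftrightarrow> (\<forall>i k. i < k \<longrightarrow> A i k = 0)"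

definition upper_triangular :: "imat \<Rightarrow> bool" where
  "upper_triangular A \<longleftrightarrow> (\<forall>i k. k < i \<longrightarrow> A i k = 0)"

lemma fps_nth_mult_power_below:
  fixes f h :: "'a::comm_ring_1 fps"
  assumes "fps_nth f 0 = 0" "i < j"
  shows "fps_nth (h * f ^ j) i = 0"
  using assms(2)
proof (induction j arbitrary: i)
  case (Suc j)
  have "fps_nth (h * f ^ Suc j) i = (\<Sum>k=0..i. fps_nth (h * f ^ j) k * fps_nth f (i - k))"
    by (simp only: power_Suc2 mult.assoc[symmetric] fps_mult_nth)
  also have "\<dots> = 0"
  proof (intro sum.neutral ballI)
    fix k assume "k \<in> {0..i}"
    with Suc show "fps_nth (h * f ^ j) k * fps_nth f (i - k) = 0"
      using assms(1) by (cases "k < j") auto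
  qed
  finally show ?case .
qed simp

lemma is_riordan_lower_triangular: "is_riordan R \<Longrightarrow> lower_triangular R"
  unfolding is_riordan_def lower_triangular_def riordan_array_def
  using fps_nth_mult_power_below by blast

lemma Dm_eq: "Dm = (\<lambda>i j. if i = j then (-1) ^ i else 0)"
proof (intro ext)
  fix i j
  have "(- fps_X :: real fps) = fps_const (-1) * fps_X"
    by simp
  then have neg_X_power: "(- fps_X :: real fps) ^ j = fps_const ((-1) ^ j) * fps_X ^ j"
    by (simp only: power_mult_distrib fps_const_power)
  show "Dm i j = (if i = j then (-1) ^ i else 0)"
    unfolding Dm_def riordan_array_def mult_1 neg_X_power fps_mult_left_const_nth
      fps_X_power_nth
    by simp
qed

lemma lower_triangular_Dm: "lower_triangular Dm"
  by (simp add: lower_triangular_def Dm_eq)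

lemma upper_triangular_Dm: "upper_triangular Dm"
  by (simp add: upper_triangular_def Dm_eq)

lemma mtrans_Dm: "mtrans Dm = Dm"
  by (auto simp: mtrans_def Dm_eq fun_eq_iff)

lemma mmul_idm_left [simp]: "mmul idm A = A"
proof -
  have "infsum (\<lambda>k. idm i k * A k j) UNIV = A i j" for i j
    by (subst infsum_cong_neutral[where T="{i}" and g="\<lambda>k. A k j"]) (auto simp: idm_def)
  then show ?thesis by (simp add: mmul_def fun_eq_iff)
qed

lemma mmul_idm_right [simp]: "mmul A idm = A"
proof -
  have "infsum (\<lambda>k. A i k * idm k j) UNIV = A i j" for i j
    by (subst infsum_cong_neutral[where T="{j}" and g="\<lambda>k. A i k"]) (auto simp: idm_def)
  then show ?thesis by (simp add: mmul_def fun_eq_iff)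
qed

lemma mmul_Dm_Dm: "mmul Dm Dm = idm"
proof -
  have "infsum (\<lambda>k. Dm i k * Dm k j) UNIV = idm i j" for i j
    by (subst infsum_cong_neutral[where T="{i}" and g="\<lambda>k. idm i j"])
       (auto simp: idm_def Dm_eq power_mult_distrib[symmetric])
  then show ?thesis by (simp add: mmul_def fun_eq_iff)
qed

lemma mtrans_mtrans [simp]: "mtrans (mtrans A) = A"
  by (simp add: mtrans_def)

lemma mtrans_idm: "mtrans idm = idm"
  by (auto simp: mtrans_def idm_def fun_eq_iff)

lemma mtrans_mmul: "mtrans (mmul A B) = mmul (mtrans B) (mtrans A)"
  by (simp add: mtrans_def mmul_def mult.commute)

lemma upper_triangular_mtrans_iff: "upper_triangular (mtrans A) \<longleftrightarrow> lower_triangular A"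
  by (auto simp: lower_triangular_def upper_triangular_def mtrans_def)

lemma lower_triangular_mtrans_iff: "lower_triangular (mtrans A) \<longleftrightarrow> upper_triangular A"
  by (auto simp: lower_triangular_def upper_triangular_def mtrans_def)

lemma mmul_uminus_left: "mmul (- A) B = - mmul A B"
  by (simp add: mmul_def infsum_uminus fun_eq_iff)

lemma mtrans_involution: "mmul A A = idm \<Longrightarrow> mmul (mtrans A) (mtrans A) = idm"
  by (metis mtrans_mmul mtrans_idm)

lemma mvmul_col: "mvmul A (col M j) = col (mmul A M) j"
  by (simp add: mvmul_def col_def mmul_def)

lemma uminus_col: "(\<lambda>i. - col M j i) = col (- M) j"
  by (simp add: col_def fun_eq_iff)

lemma mmul_lower_triangular_eq_sum:
  assumes "lower_triangular A" "i \<le> n"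
  shows "mmul A B i j = (\<Sum>k\<le>n. A i k * B k j)"
proof -
  have "infsum (\<lambda>k. A i k * B k j) UNIV = infsum (\<lambda>k. A i k * B k j) {..n}"
    by (rule infsum_cong_neutral) (use assms in \<open>auto simp: lower_triangular_def\<close>)
  then show ?thesis by (simp add: mmul_def)
qed

lemma mmul_upper_triangular_eq_sum:
  assumes "upper_triangular B" "j \<le> n"
  shows "mmul A B i j = (\<Sum>k\<le>n. A i k * B k j)"
proof -
  have "infsum (\<lambda>k. A i k * B k j) UNIV = infsum (\<lambda>k. A i k * B k j) {..n}"
    by (rule infsum_cong_neutral) (use assms in \<open>auto simp: upper_triangular_def\<close>)
  then show ?thesis by (simp add: mmul_def)
qed

lemma lower_triangular_mmul:
  "lower_triangular A \<Longrightarrow> lower_triangular B \<Longrightarrow> lower_triangular (mmul A B)"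
  by (auto simp: lower_triangular_def mmul_lower_triangular_eq_sum[OF _ order_refl]
      intro!: sum.neutral)

lemma upper_triangular_mmul:
  "upper_triangular A \<Longrightarrow> upper_triangular B \<Longrightarrow> upper_triangular (mmul A B)"
  by (auto simp: upper_triangular_def mmul_upper_triangular_eq_sum[OF _ order_refl]
      intro!: sum.neutral)

lemma lower_triangular_idm: "lower_triangular idm"
  by (simp add: lower_triangular_def idm_def)

lemma upper_triangular_idm: "upper_triangular idm"
  by (simp add: upper_triangular_def idm_def)

lemma lower_triangular_madd:
  "lower_triangular A \<Longrightarrow> lower_triangular B \<Longrightarrow> lower_triangular (madd A B)"
  by (simp add: lower_triangular_def madd_def)

lemma lower_triangular_msub:
  "lower_triangular A \<Longrightarrow> lower_triangular B \<Longrightarrow> lower_triangular (msub A B)"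
  by (simp add: lower_triangular_def msub_def)

lemma upper_triangular_madd:
  "upper_triangular A \<Longrightarrow> upper_triangular B \<Longrightarrow> upper_triangular (madd A B)"
  by (simp add: upper_triangular_def madd_def)

lemma upper_triangular_msub:
  "upper_triangular A \<Longrightarrow> upper_triangular B \<Longrightarrow> upper_triangular (msub A B)"
  by (simp add: upper_triangular_def msub_def)

lemma mmul_madd_lower_triangular:
  "lower_triangular A \<Longrightarrow> mmul A (madd B C) = madd (mmul A B) (mmul A C)"
  by (simp add: fun_eq_iff madd_def mmul_lower_triangular_eq_sum[OF _ order_refl]
      distrib_left sum.distrib)

lemma mmul_msub_lower_triangular:
  "lower_triangular A \<Longrightarrow> mmul A (msub B C) = msub (mmul A B) (mmul A C)"
  by (simp add: fun_eq_iff msub_def mmul_lower_triangular_eq_sum[OF _ order_refl]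
      right_diff_distrib sum_subtractf)

lemma mmul_madd_upper_triangular:
  assumes "upper_triangular B" "upper_triangular C"
  shows "mmul A (madd B C) = madd (mmul A B) (mmul A C)"
  using assms upper_triangular_madd[OF assms]
  by (simp add: fun_eq_iff madd_def mmul_upper_triangular_eq_sum[OF _ order_refl]
      distrib_left sum.distrib)

lemma mmul_msub_upper_triangular:
  assumes "upper_triangular B" "upper_triangular C"
  shows "mmul A (msub B C) = msub (mmul A B) (mmul A C)"
  using assms upper_triangular_msub[OF assms]
  by (simp add: fun_eq_iff msub_def mmul_upper_triangular_eq_sum[OF _ order_refl]
      right_diff_distrib sum_subtractf)

lemma mmul_assoc_lower_triangular:
  assumes "lower_triangular A" "lower_triangular B" "lower_triangular C"
  shows "mmul (mmul A B) C = mmul A (mmul B C)"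
proof (intro ext)
  fix i j
  note sum_A = mmul_lower_triangular_eq_sum[OF assms(1) order_refl]
  have "mmul (mmul A B) C i j = (\<Sum>k\<le>i. (\<Sum>l\<le>i. A i l * B l k) * C k j)"
    by (simp add: mmul_lower_triangular_eq_sum[OF lower_triangular_mmul[OF assms(1,2)] order_refl]
        sum_A)
  also have "\<dots> = (\<Sum>k\<le>i. \<Sum>l\<le>i. A i l * (B l k * C k j))"
    by (simp add: sum_distrib_right mult.assoc)
  also have "\<dots> = (\<Sum>l\<le>i. A i l * (\<Sum>k\<le>i. B l k * C k j))"
    by (subst sum.swap) (simp add: sum_distrib_left)
  also have "\<dots> = mmul A (mmul B C) i j"
    by (simp add: sum_A mmul_lower_triangular_eq_sum[OF assms(2)])
  finally show "mmul (mmul A B) C i j = mmul A (mmul B C) i j" .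
qed

lemma mmul_assoc_upper_triangular:
  assumes "upper_triangular A" "upper_triangular B" "upper_triangular C"
  shows "mmul (mmul A B) C = mmul A (mmul B C)"
proof -
  have "mtrans (mmul (mmul A B) C) = mtrans (mmul A (mmul B C))"
    using mmul_assoc_lower_triangular[of "mtrans C" "mtrans B" "mtrans A"] assms
    by (simp add: mtrans_mmul lower_triangular_mtrans_iff)
  then show ?thesis by (metis mtrans_mtrans)
qed

locale matrix_ring =
  fixes T :: "imat \<Rightarrow> bool"
  assumes T_idm: "T idm"
    and T_Dm: "T Dm"
    and T_mmul: "T A \<Longrightarrow> T B \<Longrightarrow> T (mmul A B)"
    and T_madd: "T A \<Longrightarrow> T B \<Longrightarrow> T (madd A B)"
    and T_msub: "T A \<Longrightarrow> T B \<Longrightarrow> T (msub A B)"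
    and mmul_assoc: "T A \<Longrightarrow> T B \<Longrightarrow> T C \<Longrightarrow> mmul (mmul A B) C = mmul A (mmul B C)"
    and mmul_madd_distrib:
      "T A \<Longrightarrow> T B \<Longrightarrow> T C \<Longrightarrow> mmul A (madd B C) = madd (mmul A B) (mmul A C)"
    and mmul_msub_distrib:
      "T A \<Longrightarrow> T B \<Longrightarrow> T C \<Longrightarrow> mmul A (msub B C) = msub (mmul A B) (mmul A C)"
begin

lemma T_mpow: "T A \<Longrightarrow> T (mpow A n)"
  by (induction n) (auto intro: T_idm T_mmul)

lemma mpow_Suc_left: "T A \<Longrightarrow> mpow A (Suc n) = mmul A (mpow A n)"
proof (induction n)
  case (Suc n)
  then show ?case by (simp add: mmul_assoc T_mpow)
qed simp

lemma mmul_mpow_fixed: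
  assumes "T X" "T A" "mmul X A = A"
  shows "mmul X (mpow A (Suc n)) = mpow A (Suc n)"
  using assms by (simp only: mpow_Suc_left mmul_assoc[symmetric] T_mpow)

lemma mmul_mpow_negated:
  assumes "T X" "T A" "mmul X A = - A"
  shows "mmul X (mpow A (Suc n)) = - mpow A (Suc n)"
  using assms by (simp only: mpow_Suc_left mmul_assoc[symmetric] T_mpow mmul_uminus_left)

lemma mmul_Dm_cancel_left: "T A \<Longrightarrow> mmul Dm (mmul Dm A) = A"
  by (simp add: mmul_assoc[symmetric] T_Dm mmul_Dm_Dm)

lemma mmul_Dm_cancel_right: "T A \<Longrightarrow> mmul (mmul A Dm) Dm = A"
  by (simp add: mmul_assoc T_Dm mmul_Dm_Dm)

lemma involution_conj_Dm:
  assumes "T A" "mmul (mmul Dm A) (mmul Dm A) = idm"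
  shows "mmul (mmul A Dm) (mmul A Dm) = idm"
proof -
  have "mmul (mmul A Dm) (mmul A Dm) = mmul Dm (mmul (mmul (mmul Dm A) (mmul Dm A)) Dm)"
    using assms(1) by (simp add: mmul_assoc T_mmul T_Dm mmul_Dm_cancel_left)
  with assms(2) show ?thesis by (simp add: mmul_Dm_Dm)
qed

context
  fixes X :: imat
  assumes T_X: "T X" and involution: "mmul X X = idm"
begin

lemma involution_mmul_madd: "mmul X (madd (mmul X Dm) Dm) = madd (mmul X Dm) Dm"
proof -
  have "mmul X (madd (mmul X Dm) Dm) = madd Dm (mmul X Dm)"
    using T_X T_Dm by (simp add: mmul_madd_distrib T_mmul mmul_assoc[symmetric] involution)
  then show ?thesis by (simp add: madd_def add.commute fun_eq_iff)
qed

lemma involution_mmul_msub: "mmul X (msub (mmul X Dm) Dm) = - msub (mmul X Dm) Dm"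
proof -
  have "mmul X (msub (mmul X Dm) Dm) = msub Dm (mmul X Dm)"
    using T_X T_Dm by (simp add: mmul_msub_distrib T_mmul mmul_assoc[symmetric] involution)
  then show ?thesis by (simp add: msub_def fun_eq_iff)
qed

lemma involution_columns_madd:
  "n \<ge> 1 \<Longrightarrow> mvmul X (col (mpow (madd (mmul X Dm) Dm) n) j) = col (mpow (madd (mmul X Dm) Dm) n) j"
  using mmul_mpow_fixed[OF T_X _ involution_mmul_madd] T_X T_Dm
  by (cases n) (auto simp: mvmul_col T_madd T_mmul)

lemma involution_columns_msub:
  "n \<ge> 1 \<Longrightarrow> mvmul X (col (mpow (msub (mmul X Dm) Dm) n) j) = (\<lambda>i. - col (mpow (msub (mmul X Dm) Dm) n) j i)"
  using mmul_mpow_negated[OF T_X _ involution_mmul_msub] T_X T_Dm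
  by (cases n) (auto simp: mvmul_col uminus_col T_msub T_mmul)

end

end

interpretation lower: matrix_ring lower_triangular
  by unfold_locales
    (simp_all add: lower_triangular_idm lower_triangular_Dm lower_triangular_mmul
      lower_triangular_madd lower_triangular_msub mmul_assoc_lower_triangular
      mmul_madd_lower_triangular mmul_msub_lower_triangular)

interpretation upper: matrix_ring upper_triangular
  by unfold_locales
    (simp_all add: upper_triangular_idm upper_triangular_Dm upper_triangular_mmul
      upper_triangular_madd upper_triangular_msub mmul_assoc_upper_triangular
      mmul_madd_upper_triangular mmul_msub_upper_triangular)

theorem lemma5p1:
  fixes R :: imat and n :: nat
  assumes "n \<ge> 1"
  shows "(riordan_involution R \<longrightarrow>
           (let U = mmul R Dm; V = mmul Dm R in
             (\<forall>j. inv_first R (col (mpow (madd U Dm) n) j)) \<and>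
             (\<forall>j. inverse_inv_first R (col (mpow (msub U Dm) n) j)) \<and>
             (\<forall>j. inv_second R (col (mpow (madd (mtrans V) Dm) n) j)) \<and>
             (\<forall>j. inverse_inv_second R (col (mpow (msub (mtrans V) Dm) n) j))))
       \<and> (riordan_pseudo_involution R \<longrightarrow>
             (\<forall>j. pinv_first R (col (mpow (madd R Dm) n) j)) \<and>
             (\<forall>j. inverse_pinv_first R (col (mpow (msub R Dm) n) j)) \<and>
             (\<forall>j. pinv_second R (col (mpow (madd (mtrans R) Dm) n) j)) \<and>
             (\<forall>j. inverse_pinv_second R (col (mpow (msub (mtrans R) Dm) n) j)))"
proof (intro conjI impI)
  assume "riordan_involution R"
  then have lower_R: "lower_triangular R" and RR: "mmul R R = idm"
    by (auto simp: riordan_involution_def is_riordan_lower_triangular)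
  have upper_Rt: "upper_triangular (mtrans R)"
    using lower_R by (simp add: upper_triangular_mtrans_iff)
  have "mtrans (mmul Dm R) = mmul (mtrans R) Dm"
    by (simp add: mtrans_mmul mtrans_Dm)
  then show "let U = mmul R Dm; V = mmul Dm R in
             (\<forall>j. inv_first R (col (mpow (madd U Dm) n) j)) \<and>
             (\<forall>j. inverse_inv_first R (col (mpow (msub U Dm) n) j)) \<and>
             (\<forall>j. inv_second R (col (mpow (madd (mtrans V) Dm) n) j)) \<and>
             (\<forall>j. inverse_inv_second R (col (mpow (msub (mtrans V) Dm) n) j))"
    using lower.involution_columns_madd[OF lower_R RR assms]
      lower.involution_columns_msub[OF lower_R RR assms]
      upper.involution_columns_madd[OF upper_Rt mtrans_involution[OF RR] assms]
      upper.involution_columns_msub[OF upper_Rt mtrans_involution[OF RR] assms]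
    by (simp add: inv_first_def inverse_inv_first_def inv_second_def inverse_inv_second_def)
next
  assume pseudo: "riordan_pseudo_involution R"
  then have lower_R: "lower_triangular R" and RDRD: "mmul (mmul R Dm) (mmul R Dm) = idm"
    by (auto simp: riordan_pseudo_involution_def is_riordan_lower_triangular)
  have upper_Rt: "upper_triangular (mtrans R)"
    using lower_R by (simp add: upper_triangular_mtrans_iff)
  have lower_RD: "lower_triangular (mmul R Dm)"
    by (simp add: lower_R lower_triangular_Dm lower_triangular_mmul)
  have upper_RtD: "upper_triangular (mmul (mtrans R) Dm)"
    by (simp add: upper_Rt upper_triangular_Dm upper_triangular_mmul)
  have RtDRtD: "mmul (mmul (mtrans R) Dm) (mmul (mtrans R) Dm) = idm"
    using upper.involution_conj_Dm[OF upper_Rt] mtrans_involution[OF RDRD]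
    by (simp add: mtrans_mmul mtrans_Dm)
  note columns = lower.involution_columns_madd[OF lower_RD RDRD assms]
    lower.involution_columns_msub[OF lower_RD RDRD assms]
    upper.involution_columns_madd[OF upper_RtD RtDRtD assms]
    upper.involution_columns_msub[OF upper_RtD RtDRtD assms]
  then show "\<forall>j. pinv_first R (col (mpow (madd R Dm) n) j)"
    and "\<forall>j. inverse_pinv_first R (col (mpow (msub R Dm) n) j)"
    and "\<forall>j. pinv_second R (col (mpow (madd (mtrans R) Dm) n) j)"
    and "\<forall>j. inverse_pinv_second R (col (mpow (msub (mtrans R) Dm) n) j)"
    by (simp_all add: pinv_first_def inverse_pinv_first_def pinv_second_def
        inverse_pinv_second_def lower.mmul_Dm_cancel_right[OF lower_R]
        upper.mmul_Dm_cancel_right[OF upper_Rt])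
qed

end
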